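(* Let $d\ge 2$ and $n\ge 2d$ be integers. Suppose $\mathcal{H}\subseteq\binom{[n]}{d}$ is an intersecting family (any two members intersect) with $|\mathcal{H}|\ge 6n^{d-2}$. Then there exist an element $\ell\in[n]$ and sets $A_1,\dots,A_{d+1}\in\mathcal{H}$ such that (1) $\ell\in A$ for all $A\in\mathcal{H}$, and (2) the sets $A_1\setminus\{\ell\},\dots,A_{d+1}\setminus\{\ell\}$ are pairwise disjoint.
   Context: $\binom{[n]}{d}$ denotes the family of all $d$-element subsets of $[n]$. *)

theory Defs
  imports Main
begin

end

(*
  If H had no common element, a branching argument bounds |H|: given a transversal T of H
  and no transversal of size at most k, every member of H contains one of at most
  |T| * d^k sets of size k + 1 (extend a set S by a point of a member avoiding S), and
  each of these lies in at most C(n - k - 1, d - k - 1) members. Taking for T a member of H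
  (k = 1), a transversal of size 2, or a member with k = 2 when d is 3 or 4, always gives
  |H| < 6 n^(d-2). Hence H is a star with centre l. Take an inclusion-maximal subfamily
  whose links B - {l} are pairwise disjoint: if it had at most d members, the union U of
  their links, of size at most d(d-1), would meet every link, and counting the members
  through {l, y}, y in U, again gives |H| <= d(d-1) C(n-2, d-2) < 6 n^(d-2).
*)

theory Submission
  imports Defs "HOL-Library.Disjoint_Sets"
begin

definition intersecting :: "'a set set \<Rightarrow> bool" where
  "intersecting H \<longleftrightarrow> (\<forall>A\<in>H. \<forall>B\<in>H. A \<inter> B \<noteq> {})"

definition transversal :: "'a set \<Rightarrow> 'a set set \<Rightarrow> bool" where
  "transversal T H \<longleftrightarrow> (\<forall>B\<in>H. B \<inter> T \<noteq> {})"

lemma card_supersets_le: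
  assumes "finite X"
  shows "card {B. B \<subseteq> X \<and> card B = d \<and> S \<subseteq> B} \<le> (card X - card S) choose (d - card S)"
proof (cases "S \<subseteq> X")
  case False
  then have "{B. B \<subseteq> X \<and> card B = d \<and> S \<subseteq> B} = {}" by auto
  then show ?thesis by (simp only: card.empty le0)
next
  case True
  then have "finite S"
    using assms finite_subset by blast
  have "inj_on (\<lambda>B. B - S) {B. B \<subseteq> X \<and> card B = d \<and> S \<subseteq> B}"
    by (auto simp: inj_on_def)
  moreover have "(\<lambda>B. B - S) ` {B. B \<subseteq> X \<and> card B = d \<and> S \<subseteq> B}
      \<subseteq> {T. T \<subseteq> X - S \<and> card T = d - card S}"
    using \<open>finite S\<close> by (auto simp: card_Diff_subset)
  ultimately have "card {B. B \<subseteq> X \<and> card B = d \<and> S \<subseteq> B}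
      \<le> card {T. T \<subseteq> X - S \<and> card T = d - card S}"
    using assms by (intro card_inj_on_le) auto
  also have "\<dots> = (card X - card S) choose (d - card S)"
    using True assms \<open>finite S\<close> by (simp add: n_subsets card_Diff_subset)
  finally show ?thesis .
qed

lemma card_uniform_le_through_subsets:
  assumes "finite X" "\<forall>B\<in>H. B \<subseteq> X \<and> card B = d"
    and "finite \<S>" "\<forall>S\<in>\<S>. card S = k" "\<forall>B\<in>H. \<exists>S\<in>\<S>. S \<subseteq> B"
  shows "card H \<le> card \<S> * ((card X - k) choose (d - k))"
proof -
  have "H \<subseteq> (\<Union>S\<in>\<S>. {B. B \<subseteq> X \<and> card B = d \<and> S \<subseteq> B})"
  proof
    fix B assume "B \<in> H"
    then obtain S where "S \<in> \<S>" "S \<subseteq> B"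
      using assms(5) by blast
    then show "B \<in> (\<Union>S\<in>\<S>. {B. B \<subseteq> X \<and> card B = d \<and> S \<subseteq> B})"
      using \<open>B \<in> H\<close> assms(2) by auto
  qed
  then have "card H \<le> card (\<Union>S\<in>\<S>. {B. B \<subseteq> X \<and> card B = d \<and> S \<subseteq> B})"
    using assms(1,3) by (intro card_mono) auto
  also have "\<dots> \<le> (\<Sum>S\<in>\<S>. card {B. B \<subseteq> X \<and> card B = d \<and> S \<subseteq> B})"
    using assms(3) by (rule card_UN_le)
  also have "\<dots> \<le> card \<S> * ((card X - k) choose (d - k))"
  proof -
    have bound: "card {B. B \<subseteq> X \<and> card B = d \<and> S \<subseteq> B} \<le> (card X - k) choose (d - k)"
      if "S \<in> \<S>" for S
      using card_supersets_le[OF assms(1), of d S] assms(4) that by simp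
    show ?thesis
      using sum_bounded_above[OF bound] by simp
  qed
  finally show ?thesis .
qed

lemma intersecting_refine_subsets:
  assumes "finite X" "\<forall>B\<in>H. B \<subseteq> X \<and> card B = d" "intersecting H"
    and "finite \<S>" "\<forall>S\<in>\<S>. finite S \<and> card S = j \<and> \<not> transversal S H"
    and "\<forall>B\<in>H. \<exists>S\<in>\<S>. S \<subseteq> B"
  shows "\<exists>\<S>'. finite \<S>' \<and> card \<S>' \<le> card \<S> * d \<and> (\<forall>S\<in>\<S>'. card S = Suc j)
           \<and> (\<forall>B\<in>H. \<exists>S\<in>\<S>'. S \<subseteq> B)"
proof -
  have avoiding_member: "\<forall>S\<in>\<S>. \<exists>C. C \<in> H \<and> C \<inter> S = {}"
    using assms(5) unfolding transversal_def by blast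
  obtain C where C: "\<forall>S\<in>\<S>. C S \<in> H \<and> C S \<inter> S = {}"
    using bchoice[OF avoiding_member] by blast
  have C_finite: "\<forall>S\<in>\<S>. finite (C S) \<and> card (C S) = d"
    using C assms(1,2) finite_subset by metis
  define \<S>' where "\<S>' = (\<lambda>(S, y). insert y S) ` Sigma \<S> C"
  have "card \<S>' \<le> card (Sigma \<S> C)"
    unfolding \<S>'_def using assms(4) C_finite by (intro card_image_le) auto
  also have "\<dots> = card \<S> * d"
    using assms(4) C_finite by simp
  finally have "card \<S>' \<le> card \<S> * d" .
  moreover have "\<forall>S'\<in>\<S>'. card S' = Suc j"
  proof
    fix S' assume "S' \<in> \<S>'"
    then obtain S y where "S \<in> \<S>" "y \<in> C S" "S' = insert y S"
      unfolding \<S>'_def by blast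
    moreover have "y \<notin> S"
      using C \<open>S \<in> \<S>\<close> \<open>y \<in> C S\<close> by blast
    ultimately show "card S' = Suc j"
      using assms(5) by simp
  qed
  moreover have "\<forall>B\<in>H. \<exists>S'\<in>\<S>'. S' \<subseteq> B"
  proof
    fix B assume "B \<in> H"
    then obtain S where S: "S \<in> \<S>" "S \<subseteq> B"
      using assms(6) by blast
    then obtain y where "y \<in> B" "y \<in> C S"
      using C assms(3) \<open>B \<in> H\<close> unfolding intersecting_def by blast
    then have "insert y S \<in> \<S>'" "insert y S \<subseteq> B"
      unfolding \<S>'_def using S by auto
    then show "\<exists>S'\<in>\<S>'. S' \<subseteq> B"
      by blast
  qed
  moreover have "finite \<S>'"
    unfolding \<S>'_def using assms(4) C_finite by auto
  ultimately show ?thesis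
    by blast
qed

lemma intersecting_branching:
  assumes "finite X" "\<forall>B\<in>H. B \<subseteq> X \<and> card B = d" "intersecting H"
    and "finite T" "transversal T H"
    and "\<forall>S. finite S \<longrightarrow> card S \<le> k \<longrightarrow> \<not> transversal S H"
  shows "\<exists>\<S>. finite \<S> \<and> card \<S> \<le> card T * d ^ k \<and> (\<forall>S\<in>\<S>. card S = Suc k)
           \<and> (\<forall>B\<in>H. \<exists>S\<in>\<S>. S \<subseteq> B)"
  using assms(6)
proof (induction k)
  case 0
  have "\<forall>B\<in>H. \<exists>S\<in>(\<lambda>y. {y}) ` T. S \<subseteq> B"
  proof
    fix B assume "B \<in> H"
    then obtain y where "y \<in> B" "y \<in> T"
      using assms(5) unfolding transversal_def by blast
    then show "\<exists>S\<in>(\<lambda>y. {y}) ` T. S \<subseteq> B"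
      by blast
  qed
  then show ?case
    using assms(4) card_image_le[OF assms(4), of "\<lambda>y. {y}"] by auto
next
  case (Suc k)
  then obtain \<S> where \<S>: "finite \<S>" "card \<S> \<le> card T * d ^ k" "\<forall>S\<in>\<S>. card S = Suc k"
    "\<forall>B\<in>H. \<exists>S\<in>\<S>. S \<subseteq> B"
    by (metis le_SucI)
  have "\<forall>S\<in>\<S>. finite S \<and> card S = Suc k \<and> \<not> transversal S H"
  proof
    fix S assume "S \<in> \<S>"
    then have "finite S" "card S = Suc k"
      using \<S>(3) by (metis Zero_not_Suc card.infinite, simp)
    then show "finite S \<and> card S = Suc k \<and> \<not> transversal S H"
      using Suc.prems by simp
  qed
  then have "\<exists>\<S>'. finite \<S>' \<and> card \<S>' \<le> card \<S> * d \<and> (\<forall>S\<in>\<S>'. card S = Suc (Suc k))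
      \<and> (\<forall>B\<in>H. \<exists>S\<in>\<S>'. S \<subseteq> B)"
    by (rule intersecting_refine_subsets[OF assms(1-3) \<S>(1) _ \<S>(4)])
  then obtain \<S>' where \<S>': "finite \<S>'" "card \<S>' \<le> card \<S> * d"
    "\<forall>S\<in>\<S>'. card S = Suc (Suc k)" "\<forall>B\<in>H. \<exists>S\<in>\<S>'. S \<subseteq> B"
    by blast
  have "card \<S>' \<le> card T * d ^ k * d"
    using \<S>'(2) \<S>(2) by (meson le_trans mult_le_mono1)
  then have "card \<S>' \<le> card T * d ^ Suc k"
    by (simp add: ac_simps)
  with \<S>' show ?case
    by blast
qed

lemma intersecting_card_le:
  assumes "finite X" "\<forall>B\<in>H. B \<subseteq> X \<and> card B = d" "intersecting H"
    and "finite T" "transversal T H"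
    and "\<forall>S. finite S \<longrightarrow> card S \<le> k \<longrightarrow> \<not> transversal S H"
  shows "card H \<le> card T * d ^ k * ((card X - Suc k) choose (d - Suc k))"
proof -
  obtain \<S> where "finite \<S>" "card \<S> \<le> card T * d ^ k" "\<forall>S\<in>\<S>. card S = Suc k"
    "\<forall>B\<in>H. \<exists>S\<in>\<S>. S \<subseteq> B"
    using intersecting_branching[OF assms] by blast
  then have "card H \<le> card \<S> * ((card X - Suc k) choose (d - Suc k))"
    by (intro card_uniform_le_through_subsets[OF assms(1,2)])
  also have "\<dots> \<le> card T * d ^ k * ((card X - Suc k) choose (d - Suc k))"
    using \<open>card \<S> \<le> card T * d ^ k\<close> by (rule mult_le_mono1)
  finally show ?thesis .
qed

lemma mult_choose_lt_mult_pow: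
  fixes a c j k n :: nat
  assumes "c \<le> a * fact k" "0 < a" "0 < k" "0 < j" "0 < n"
  shows "c * ((n - j) choose k) < a * n ^ k"
proof -
  have "c * ((n - j) choose k) \<le> a * (((n - j) choose k) * fact k)"
    using assms(1) by (metis mult.assoc mult.commute mult_le_mono1)
  also have "\<dots> \<le> a * (n - j) ^ k"
    using binomial_fact_pow by simp
  also have "\<dots> < a * n ^ k"
    using assms(2-5) by (simp add: power_strict_mono)
  finally show ?thesis .
qed

lemma square_le_six_fact: "5 \<le> d \<Longrightarrow> d\<^sup>2 \<le> 6 * fact (d - 2)"
proof (induction d rule: nat_induct_at_least)
  case base
  show ?case
    by (simp add: numeral_eq_Suc)
next
  case (Suc d)
  define e where "e = d - 2"
  have d: "d = e + 2"
    using Suc.hyps unfolding e_def by simp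
  have "(Suc d)\<^sup>2 \<le> (e + 1) * d\<^sup>2"
    using Suc.hyps unfolding d by (simp add: power2_eq_square algebra_simps)
  also have "\<dots> \<le> (e + 1) * (6 * fact e)"
    using Suc.IH unfolding d by (intro mult_le_mono2) simp
  also have "\<dots> = 6 * fact (Suc d - 2)"
    unfolding d by (simp add: fact_Suc)
  finally show ?case .
qed

lemma mult_pred_mult_choose_lt:
  fixes d n :: nat
  assumes "2 \<le> d" "0 < n"
  shows "d * (d - 1) * ((n - 2) choose (d - 2)) < 6 * n ^ (d - 2)"
proof (cases "d = 2")
  case False
  have "d * (d - 1) \<le> 6 * fact (d - 2)"
  proof (cases "5 \<le> d")
    case True
    have "d * (d - 1) \<le> d\<^sup>2"
      by (simp add: power2_eq_square)
    also have "\<dots> \<le> 6 * fact (d - 2)"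
      using True by (rule square_le_six_fact)
    finally show ?thesis .
  next
    case False
    then have "d = 3 \<or> d = 4"
      using assms(1) \<open>d \<noteq> 2\<close> by auto
    then show ?thesis
      by (auto simp: fact_numeral)
  qed
  then show ?thesis
    using assms False by (intro mult_choose_lt_mult_pow) auto
qed simp

lemma no_transversal_card_le_one:
  assumes "H \<noteq> {}" "\<nexists>l. \<forall>B\<in>H. l \<in> B"
  shows "\<forall>S. finite S \<longrightarrow> card S \<le> 1 \<longrightarrow> \<not> transversal S H"
proof (intro allI impI notI)
  fix S assume S: "finite S" "card S \<le> 1" "transversal S H"
  then obtain x where "x \<in> S"
    using assms(1) unfolding transversal_def by blast
  with S(1,2) have "S = {x}"
    by (auto simp: card_le_Suc0_iff_eq)
  with S(3) assms(2) show False
    unfolding transversal_def by blast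
qed

lemma intersecting_card_lt_of_d_3_4:
  assumes "finite X" "\<forall>B\<in>H. B \<subseteq> X \<and> card B = d" "intersecting H"
    and "\<forall>S. finite S \<longrightarrow> card S \<le> 1 \<longrightarrow> \<not> transversal S H"
    and "d = 3 \<or> d = 4" "2 * d \<le> card X"
  shows "card H < 6 * card X ^ (d - 2)"
proof (cases "\<exists>T. finite T \<and> card T \<le> 2 \<and> transversal T H")
  case True
  then obtain T where T: "finite T" "card T \<le> 2" "transversal T H"
    by blast
  have "card H \<le> card T * d * ((card X - 2) choose (d - 2))"
    using intersecting_card_le[OF assms(1-3) T(1,3) assms(4)] by (simp add: numeral_2_eq_2)
  also have "\<dots> \<le> 2 * d * ((card X - 2) choose (d - 2))"
    using T(2) by simp
  also have "\<dots> < 6 * card X ^ (d - 2)"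
    using assms(5,6) by (intro mult_choose_lt_mult_pow) auto
  finally show ?thesis .
next
  case False
  obtain A where "A \<in> H"
    using assms(4) unfolding transversal_def by fastforce
  then have A: "finite A" "transversal A H" "card A = d"
    using assms(1-3) finite_subset unfolding intersecting_def transversal_def by metis+
  have "card H \<le> d * d ^ 2 * ((card X - 3) choose (d - 3))"
    using intersecting_card_le[OF assms(1-3) A(1,2), of 2] False A(3) by auto
  also have "\<dots> < 6 * card X ^ (d - 2)"
    using assms(5)
  proof
    assume "d = 3"
    then show ?thesis
      using assms(6) by simp
  next
    assume "d = 4"
    moreover obtain m where "card X = m + 8"
      using assms(6) \<open>d = 4\<close> le_iff_add by (metis add.commute mult_2 numeral_Bit0)
    ultimately show ?thesis
      by (simp add: power2_eq_square algebra_simps)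
  qed
  finally show ?thesis .
qed

lemma intersecting_large_has_common_element:
  assumes "finite X" "\<forall>B\<in>H. B \<subseteq> X \<and> card B = d" "intersecting H"
    and "2 \<le> d" "2 * d \<le> card X" "6 * card X ^ (d - 2) \<le> card H"
  shows "\<exists>l. \<forall>B\<in>H. l \<in> B"
proof (rule ccontr)
  assume no_common: "\<nexists>l. \<forall>B\<in>H. l \<in> B"
  have "H \<noteq> {}"
    using assms(4-6) by (intro notI) simp
  then have no_point: "\<forall>S. finite S \<longrightarrow> card S \<le> 1 \<longrightarrow> \<not> transversal S H"
    using no_common by (rule no_transversal_card_le_one)
  have "card H < 6 * card X ^ (d - 2)"
  proof (cases "d = 3 \<or> d = 4")
    case True
    then show ?thesis
      using intersecting_card_lt_of_d_3_4[OF assms(1-3) no_point _ assms(5)] by blast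
  next
    case False
    obtain A where "A \<in> H"
      using \<open>H \<noteq> {}\<close> by blast
    then have A: "finite A" "transversal A H" "card A = d"
      using assms(1-3) finite_subset unfolding intersecting_def transversal_def by metis+
    have "card H \<le> d * d * ((card X - 2) choose (d - 2))"
      using intersecting_card_le[OF assms(1-3) A(1,2) no_point] A(3) by (simp add: numeral_2_eq_2)
    also have "\<dots> < 6 * card X ^ (d - 2)"
    proof (cases "d = 2")
      case False
      then have "5 \<le> d"
        using assms(4) \<open>\<not> (d = 3 \<or> d = 4)\<close> by auto
      then show ?thesis
        using assms(5) square_le_six_fact[of d]
        by (intro mult_choose_lt_mult_pow) (auto simp: power2_eq_square)
    qed simp
    finally show ?thesis .
  qed
  with assms(6) show False
    by simp
qed

lemma maximal_disjoint_family_on_transversal: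
  assumes "M \<subseteq> H" "disjoint_family_on f M" "\<forall>B\<in>H. f B \<noteq> {}"
    and "\<forall>M'. M \<subseteq> M' \<and> M' \<subseteq> H \<and> disjoint_family_on f M' \<longrightarrow> M = M'"
  shows "transversal (\<Union>B\<in>M. f B) (f ` H)"
  unfolding transversal_def
proof
  fix C assume "C \<in> f ` H"
  then obtain B where B: "B \<in> H" "C = f B"
    by blast
  show "C \<inter> (\<Union>B\<in>M. f B) \<noteq> {}"
  proof
    assume disjoint: "C \<inter> (\<Union>B\<in>M. f B) = {}"
    have "B \<notin> M"
      using B disjoint assms(3) by blast
    moreover have "disjoint_family_on f (insert B M)"
      using \<open>B \<notin> M\<close> B disjoint assms(2) by (simp add: disjoint_family_on_insert)
    ultimately show False
      using assms(1,4) B(1) by blast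
  qed
qed

lemma disjoint_family_or_transversal:
  assumes "finite H" "\<forall>B\<in>H. finite (f B) \<and> f B \<noteq> {} \<and> card (f B) \<le> m"
  shows "(\<exists>M\<subseteq>H. card M = Suc s \<and> disjoint_family_on f M)
       \<or> (\<exists>U. finite U \<and> card U \<le> s * m \<and> transversal U (f ` H))"
proof -
  let ?D = "{M. M \<subseteq> H \<and> disjoint_family_on f M}"
  have "finite ?D"
    by (rule finite_subset[of _ "Pow H"]) (use assms(1) in auto)
  moreover have "?D \<noteq> {}"
    by (auto simp: disjoint_family_on_def)
  ultimately obtain M where "M \<in> ?D" and maximal: "\<forall>M'\<in>?D. M \<subseteq> M' \<longrightarrow> M = M'"
    by (meson finite_has_maximal)
  then have M: "M \<subseteq> H" "disjoint_family_on f M"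
    by auto
  have "finite M"
    using M(1) assms(1) finite_subset by blast
  show ?thesis
  proof (cases "Suc s \<le> card M")
    case True
    then obtain M' where "M' \<subseteq> M" "card M' = Suc s"
      by (meson obtain_subset_with_card_n)
    then show ?thesis
      using M disjoint_family_on_mono[of M' M f] by auto
  next
    case False
    have "card (\<Union>B\<in>M. f B) \<le> (\<Sum>B\<in>M. card (f B))"
      using \<open>finite M\<close> by (rule card_UN_le)
    also have "\<dots> \<le> card M * m"
      using M(1) assms(2) sum_bounded_above[of M "\<lambda>B. card (f B)" m] by auto
    also have "\<dots> \<le> s * m"
      using False by simp
    finally have "card (\<Union>B\<in>M. f B) \<le> s * m" .
    moreover have "finite (\<Union>B\<in>M. f B)"
      using \<open>finite M\<close> M(1) assms(2) by auto
    moreover have "transversal (\<Union>B\<in>M. f B) (f ` H)"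
      using M assms(2) maximal by (intro maximal_disjoint_family_on_transversal) auto
    ultimately show ?thesis
      by blast
  qed
qed

lemma card_star_le:
  assumes "finite X" "\<forall>B\<in>H. B \<subseteq> X \<and> card B = d" "\<forall>B\<in>H. l \<in> B"
    and "finite U" "transversal U ((\<lambda>B. B - {l}) ` H)"
  shows "card H \<le> card U * ((card X - 2) choose (d - 2))"
proof -
  let ?\<S> = "(\<lambda>y. {l, y}) ` (U - {l})"
  have "card ?\<S> \<le> card (U - {l})"
    using assms(4) by (intro card_image_le) simp
  also have "\<dots> \<le> card U"
    using assms(4) by (intro card_mono) auto
  finally have "card ?\<S> \<le> card U" .
  moreover have "\<forall>S\<in>?\<S>. card S = 2"
    by (auto simp: card_2_iff)
  moreover have "\<forall>B\<in>H. \<exists>S\<in>?\<S>. S \<subseteq> B"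
  proof
    fix B assume "B \<in> H"
    then obtain y where "y \<in> B - {l}" "y \<in> U"
      using assms(5) unfolding transversal_def by blast
    then have "{l, y} \<in> ?\<S>" "{l, y} \<subseteq> B"
      using assms(3) \<open>B \<in> H\<close> by auto
    then show "\<exists>S\<in>?\<S>. S \<subseteq> B"
      by blast
  qed
  ultimately have "card H \<le> card ?\<S> * ((card X - 2) choose (d - 2))"
    using assms(4) by (intro card_uniform_le_through_subsets[OF assms(1,2)]) auto
  also have "\<dots> \<le> card U * ((card X - 2) choose (d - 2))"
    using \<open>card ?\<S> \<le> card U\<close> by (rule mult_le_mono1)
  finally show ?thesis .
qed

lemma disjoint_family_on_enumerate:
  assumes "finite M" "disjoint_family_on f M"
  obtains A where "\<forall>i\<in>{1..card M}. A i \<in> M"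
    "\<forall>i\<in>{1..card M}. \<forall>j\<in>{1..card M}. i \<noteq> j \<longrightarrow> f (A i) \<inter> f (A j) = {}"
proof -
  obtain A where "bij_betw A {1..card M} M"
    using ex_bij_betw_nat_finite_1[OF assms(1)] ..
  then have "inj_on A {1..card M}" "A ` {1..card M} = M"
    by (auto simp: bij_betw_def)
  show thesis
  proof (rule that)
    show "\<forall>i\<in>{1..card M}. A i \<in> M"
      using \<open>A ` {1..card M} = M\<close> by blast
    show "\<forall>i\<in>{1..card M}. \<forall>j\<in>{1..card M}. i \<noteq> j \<longrightarrow> f (A i) \<inter> f (A j) = {}"
    proof (intro ballI impI)
      fix i j assume "i \<in> {1..card M}" "j \<in> {1..card M}" "i \<noteq> j"
      then have "A i \<in> M" "A j \<in> M" "A i \<noteq> A j"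
        using \<open>inj_on A {1..card M}\<close> \<open>A ` {1..card M} = M\<close> by (auto dest: inj_onD)
      then show "f (A i) \<inter> f (A j) = {}"
        by (rule disjoint_family_onD[OF assms(2)])
    qed
  qed
qed

lemma star_has_disjoint_links:
  assumes "finite X" "\<forall>B\<in>H. B \<subseteq> X \<and> card B = d" "\<forall>B\<in>H. l \<in> B"
    and "2 \<le> d" "0 < card X" "6 * card X ^ (d - 2) \<le> card H"
  shows "\<exists>M\<subseteq>H. card M = Suc d \<and> disjoint_family_on (\<lambda>B. B - {l}) M"
proof -
  have "finite H"
    using assms(1,2) finite_subset[of H "Pow X"] by auto
  have links: "\<forall>B\<in>H. finite (B - {l}) \<and> B - {l} \<noteq> {} \<and> card (B - {l}) \<le> d - 1"
  proof
    fix B assume "B \<in> H"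
    then have "B \<subseteq> X" "card B = d" "l \<in> B"
      using assms(2,3) by auto
    then have "finite (B - {l})" "card (B - {l}) = d - 1"
      using assms(1) by (simp_all add: card_Diff_singleton finite_subset)
    moreover have "B - {l} \<noteq> {}"
      using calculation assms(4) card_gt_0_iff[of "B - {l}"] by simp
    ultimately show "finite (B - {l}) \<and> B - {l} \<noteq> {} \<and> card (B - {l}) \<le> d - 1"
      by simp
  qed
  have "\<nexists>U. finite U \<and> card U \<le> d * (d - 1) \<and> transversal U ((\<lambda>B. B - {l}) ` H)"
  proof
    assume "\<exists>U. finite U \<and> card U \<le> d * (d - 1) \<and> transversal U ((\<lambda>B. B - {l}) ` H)"
    then obtain U where U: "finite U" "card U \<le> d * (d - 1)" "transversal U ((\<lambda>B. B - {l}) ` H)"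
      by blast
    have "card H \<le> card U * ((card X - 2) choose (d - 2))"
      by (rule card_star_le[OF assms(1-3) U(1,3)])
    also have "\<dots> \<le> d * (d - 1) * ((card X - 2) choose (d - 2))"
      using U(2) by simp
    also have "\<dots> < 6 * card X ^ (d - 2)"
      using assms(4,5) by (rule mult_pred_mult_choose_lt)
    finally show False
      using assms(6) by simp
  qed
  then show ?thesis
    using disjoint_family_or_transversal[OF \<open>finite H\<close> links, of d] by blast
qed

theorem lemma5p3:
  fixes d n :: nat and H :: "nat set set"
  assumes "d \<ge> 2" and "n \<ge> 2 * d"
    and "\<forall>A\<in>H. A \<subseteq> {1..n} \<and> card A = d"
    and "\<forall>A\<in>H. \<forall>B\<in>H. A \<inter> B \<noteq> {}"
    and "card H \<ge> 6 * n ^ (d - 2)"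
  shows "\<exists>l \<in> {1..n}. \<exists>A :: nat \<Rightarrow> nat set.
           (\<forall>B\<in>H. l \<in> B) \<and>
           (\<forall>i\<in>{1..d+1}. A i \<in> H) \<and>
           (\<forall>i\<in>{1..d+1}. \<forall>j\<in>{1..d+1}. i \<noteq> j \<longrightarrow>
               (A i - {l}) \<inter> (A j - {l}) = {})"
proof -
  have "intersecting H"
    using assms(4) unfolding intersecting_def .
  then obtain l where l: "\<forall>B\<in>H. l \<in> B"
    using intersecting_large_has_common_element[OF _ assms(3)] assms(1,2,5) by auto
  obtain M where M: "M \<subseteq> H" "card M = d + 1" "disjoint_family_on (\<lambda>B. B - {l}) M"
    using star_has_disjoint_links[OF _ assms(3) l assms(1)] assms(1,2,5) by auto
  then have "M \<noteq> {}" "finite M"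
    by (auto intro: card_ge_0_finite)
  then have "l \<in> {1..n}"
    using l M(1) assms(3) by blast
  obtain A where "\<forall>i\<in>{1..d+1}. A i \<in> M"
    "\<forall>i\<in>{1..d+1}. \<forall>j\<in>{1..d+1}. i \<noteq> j \<longrightarrow> (A i - {l}) \<inter> (A j - {l}) = {}"
    by (rule disjoint_family_on_enumerate[OF \<open>finite M\<close> M(3), unfolded M(2)])
  then show ?thesis
    using l \<open>l \<in> {1..n}\<close> M(1) by blast
qed

end
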